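(* Let $\mathfrak{G}$ be a compactly generated groupoid of germs. Then for every compact topological transversal $X\subset\mathfrak{G}^{(0)}$ there exists a compact set $S\subset\mathfrak{G}|_X$ such that $(S,X)$ is a compact generating pair of $\mathfrak{G}$.
   Context: $\mathfrak{G}$ is the groupoid of germs of a pseudogroup of homeomorphisms between open subsets of a locally compact metrizable space $\mathfrak{G}^{(0)}$ (germs $(F,x)$ with $\mathsf{o}(F,x)=x$, $\mathsf{t}(F,x)=F(x)$, germ topology). For $A\subset\mathfrak{G}^{(0)}$, $\mathfrak{G}|_A=\{g:\mathsf{o}(g),\mathsf{t}(g)\in A\}$. A set $X\subset\mathfrak{G}^{(0)}$ is a topological transversal if it contains an open set meeting every $\mathfrak{G}$-orbit. A compact generating pair is a pair $(S,X)$ of compact sets $S\subset\mathfrak{G}$, $X\subset\mathfrak{G}^{(0)}$, with $X$ a topological transversal, such that for every $g\in\mathfrak{G}|_X$ there is $n$ such that $\bigcup_{k=1}^n(S\cup S^{-1})^k$ is a neighborhood of $g$ in $\mathfrak{G}|_X$. $\mathfrak{G}$ is compactly generated if it has a compact generating pair. *)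

theory Defs
  imports "HOL-Analysis.Analysis"
begin

text \<open>The unit space G^(0) is the whole carrier of a metric-space type 'a (hence metrizable);
local compactness is assumed separately.\<close>

definition partial_homeo :: "('a::topological_space \<Rightarrow> 'a) \<Rightarrow> 'a set \<Rightarrow> bool" where
  "partial_homeo f U \<longleftrightarrow> open U \<and> open (f ` U) \<and> inj_on f U \<and> continuous_on U f
      \<and> continuous_on (f ` U) (inv_into U f)"

definition pseudogroup :: "(('a::topological_space \<Rightarrow> 'a) \<times> 'a set) set \<Rightarrow> bool" where
  "pseudogroup P \<longleftrightarrow>
     (\<forall>(f,U)\<in>P. partial_homeo f U)
   \<and> (id, UNIV) \<in> P
   \<and> (\<forall>f U V. (f,U) \<in> P \<longrightarrow> open V \<longrightarrow> V \<subseteq> U \<longrightarrow> (f,V) \<in> P)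
   \<and> (\<forall>f U g V. (f,U) \<in> P \<longrightarrow> (g,V) \<in> P \<longrightarrow> (g \<circ> f, U \<inter> f -` V) \<in> P)
   \<and> (\<forall>f U. (f,U) \<in> P \<longrightarrow> (inv_into U f, f ` U) \<in> P)
   \<and> (\<forall>f U. partial_homeo f U \<longrightarrow>
        (\<forall>x\<in>U. \<exists>W. open W \<and> x \<in> W \<and> W \<subseteq> U \<and> (f,W) \<in> P) \<longrightarrow> (f,U) \<in> P)"

text \<open>A germ is represented by its base point together with the class of all maps
agreeing with a representative on a neighbourhood of the base point.\<close>

type_synonym 'a germ = "'a \<times> ('a \<Rightarrow> 'a) set"

definition germ_of :: "('a::topological_space \<Rightarrow> 'a) \<Rightarrow> 'a \<Rightarrow> 'a germ" where
  "germ_of f x = (x, {g. \<exists>V. open V \<and> x \<in> V \<and> (\<forall>y\<in>V. g y = f y)})"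

definition germs :: "(('a::topological_space \<Rightarrow> 'a) \<times> 'a set) set \<Rightarrow> 'a germ set" where
  "germs P = {germ_of f x | f U x. (f,U) \<in> P \<and> x \<in> U}"

definition gsrc :: "'a germ \<Rightarrow> 'a" where
  "gsrc g = fst g"

definition gtgt :: "'a germ \<Rightarrow> 'a" where
  "gtgt g = (SOME f. f \<in> snd g) (fst g)"

definition germ_top :: "(('a::topological_space \<Rightarrow> 'a) \<times> 'a set) set \<Rightarrow> 'a germ topology" where
  "germ_top P = topology_generated_by {{germ_of f x | x. x \<in> U} | f U. (f,U) \<in> P}"

definition restr :: "(('a::topological_space \<Rightarrow> 'a) \<times> 'a set) set \<Rightarrow> 'a set \<Rightarrow> 'a germ set" where
  "restr P A = {g \<in> germs P. gsrc g \<in> A \<and> gtgt g \<in> A}"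

text \<open>Product of sets of germs: A B = {a b | ...}, where b is applied first
(so origin of a = target of b).\<close>
definition gmul :: "(('a::topological_space \<Rightarrow> 'a) \<times> 'a set) set \<Rightarrow> 'a germ set \<Rightarrow> 'a germ set \<Rightarrow> 'a germ set" where
  "gmul P A B = {germ_of (f \<circ> k) x | f U k V x. (f,U) \<in> P \<and> (k,V) \<in> P \<and> x \<in> V \<and> k x \<in> U
                   \<and> germ_of f (k x) \<in> A \<and> germ_of k x \<in> B}"

definition ginv :: "(('a::topological_space \<Rightarrow> 'a) \<times> 'a set) set \<Rightarrow> 'a germ set \<Rightarrow> 'a germ set" where
  "ginv P A = {germ_of (inv_into U f) (f x) | f U x. (f,U) \<in> P \<and> x \<in> U \<and> germ_of f x \<in> A}"

primrec gpow :: "(('a::topological_space \<Rightarrow> 'a) \<times> 'a set) set \<Rightarrow> 'a germ set \<Rightarrow> nat \<Rightarrow> 'a germ set" where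
  "gpow P A 0 = {germ_of id x | x. True}"
| "gpow P A (Suc k) = gmul P A (gpow P A k)"

definition top_transversal :: "(('a::topological_space \<Rightarrow> 'a) \<times> 'a set) set \<Rightarrow> 'a set \<Rightarrow> bool" where
  "top_transversal P X \<longleftrightarrow>
     (\<exists>V. open V \<and> V \<subseteq> X \<and> (\<forall>x. \<exists>g\<in>germs P. gsrc g = x \<and> gtgt g \<in> V))"

definition compact_generating_pair ::
  "(('a::topological_space \<Rightarrow> 'a) \<times> 'a set) set \<Rightarrow> 'a germ set \<Rightarrow> 'a set \<Rightarrow> bool" where
  "compact_generating_pair P S X \<longleftrightarrow>
     S \<subseteq> germs P \<and> compactin (germ_top P) S \<and> compact X \<and> top_transversal P X
   \<and> (\<forall>g\<in>restr P X. \<exists>n. \<exists>W. openin (subtopology (germ_top P) (restr P X)) W \<and> g \<in> W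
          \<and> W \<subseteq> (\<Union>k\<in>{1..n}. gpow P (S \<union> ginv P S) k))"

definition compactly_generated :: "(('a::topological_space \<Rightarrow> 'a) \<times> 'a set) set \<Rightarrow> bool" where
  "compactly_generated P \<longleftrightarrow> (\<exists>S X. compact_generating_pair P S X)"

end

theory Submission
  imports Defs
begin

text \<open>
Let (S0, Y) be a compact generating pair.  Since X and Y are transversals and the space is
locally compact, finitely many pseudogroup elements k_i, each carrying a neighbourhood of a
compact set into X, cover Y and the ends of S0, and finitely many l_j carrying compact sets
into Y cover X.  The new generators are the conjugates k_j s k_i\<inverse> of the s \<in> S0 and the germs
of k_i l_j at points of X; they form a compact subset of G|_X.  Conjugating a germ g of G|_X by
the l_j lands in G|_Y, where on a neighbourhood it is a product of at most n elements of
S0 and their inverses.  Conjugating every factor by the k_i and writing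
g = (k_i' l_j')\<inverse> (k_i' l_j' g (k_i l_j)\<inverse>) (k_i l_j) exhibits g as a product of at most n + 2 new
generators and their inverses.  Continuity of conjugation in the germ topology makes the same
bound hold on a neighbourhood of g.
\<close>

lemma eventually_nhds_openI:
  "open S \<Longrightarrow> x \<in> S \<Longrightarrow> (\<And>z. z \<in> S \<Longrightarrow> Q z) \<Longrightarrow> \<forall>\<^sub>F z in nhds x. Q z"
  unfolding eventually_nhds by blast

lemma compactin_UN:
  "finite I \<Longrightarrow> (\<And>i. i \<in> I \<Longrightarrow> compactin X (F i)) \<Longrightarrow> compactin X (\<Union>i\<in>I. F i)"
  by (rule compactin_Union) auto

lemma germ_of_eq_iff:
  "germ_of f x = germ_of g y \<longleftrightarrow> x = y \<and> (\<forall>\<^sub>F z in nhds x. f z = g z)"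
proof
  assume h: "germ_of f x = germ_of g y"
  have "f \<in> snd (germ_of g y)" using h[symmetric] unfolding germ_of_def by auto
  then show "x = y \<and> (\<forall>\<^sub>F z in nhds x. f z = g z)"
    using h unfolding germ_of_def eventually_nhds by auto
next
  assume h: "x = y \<and> (\<forall>\<^sub>F z in nhds x. f z = g z)"
  then obtain V where V: "open V" "x \<in> V" "\<forall>z\<in>V. f z = g z" unfolding eventually_nhds by blast
  have agree: "(\<exists>W. open W \<and> x \<in> W \<and> (\<forall>y\<in>W. h y = f y))
             \<longleftrightarrow> (\<exists>W. open W \<and> x \<in> W \<and> (\<forall>y\<in>W. h y = g y))" for h
    using V by (metis IntD1 IntD2 IntI open_Int)
  show "germ_of f x = germ_of g y" using h agree unfolding germ_of_def by simp
qed

lemma germ_of_eqI: "\<forall>\<^sub>F z in nhds x. f z = g z \<Longrightarrow> germ_of f x = germ_of g x"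
  by (simp add: germ_of_eq_iff)

lemma germ_of_eqD: "germ_of f x = germ_of g x \<Longrightarrow> \<forall>\<^sub>F z in nhds x. f z = g z"
  by (simp add: germ_of_eq_iff)

lemma gsrc_germ_of [simp]: "gsrc (germ_of f x) = x"
  by (simp add: gsrc_def germ_of_def)

lemma germ_of_representative: "germ_of (SOME h. h \<in> snd (germ_of f x)) x = germ_of f x"
proof -
  have "f \<in> snd (germ_of f x)" unfolding germ_of_def by auto
  then have "(SOME h. h \<in> snd (germ_of f x)) \<in> snd (germ_of f x)"
    by (rule someI[where P = "\<lambda>h. h \<in> snd (germ_of f x)"])
  then obtain V where "open V" "x \<in> V" "\<forall>y\<in>V. (SOME h. h \<in> snd (germ_of f x)) y = f y"
    by (auto simp: germ_of_def)
  then show ?thesis by (intro germ_of_eqI eventually_nhds_openI[of V]) auto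
qed

lemma gtgt_germ_of [simp]: "gtgt (germ_of f x) = f x"
  using eventually_nhds_x_imp_x[OF germ_of_eqD[OF germ_of_representative]]
  by (simp add: gtgt_def germ_of_def)

locale germ_groupoid =
  fixes P :: "(('a::metric_space \<Rightarrow> 'a) \<times> 'a set) set"
  assumes pseudogroup: "pseudogroup P"
begin

lemma P_partial_homeo: "(f,U) \<in> P \<Longrightarrow> partial_homeo f U"
  using pseudogroup unfolding pseudogroup_def by fast

lemma P_open: "(f,U) \<in> P \<Longrightarrow> open U"
  and P_inj: "(f,U) \<in> P \<Longrightarrow> inj_on f U"
  and P_continuous: "(f,U) \<in> P \<Longrightarrow> continuous_on U f"
  using P_partial_homeo unfolding partial_homeo_def by blast+

lemma P_id: "(id, UNIV) \<in> P"
  and P_restrict: "(f,U) \<in> P \<Longrightarrow> open V \<Longrightarrow> V \<subseteq> U \<Longrightarrow> (f,V) \<in> P"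
  and P_comp: "(f,U) \<in> P \<Longrightarrow> (g,V) \<in> P \<Longrightarrow> (g \<circ> f, U \<inter> f -` V) \<in> P"
  and P_inv: "(f,U) \<in> P \<Longrightarrow> (inv_into U f, f ` U) \<in> P"
  using pseudogroup unfolding pseudogroup_def by blast+

lemma P_inv_into_f: "(f,U) \<in> P \<Longrightarrow> x \<in> U \<Longrightarrow> inv_into U f (f x) = x"
  by (simp add: P_inj inv_into_f_f)

lemma P_compose_at:
  assumes "(r,R) \<in> P" "(f,U) \<in> P" "y \<in> R" "r y \<in> U"
  shows "\<exists>W. ((\<lambda>w. f (r w)), W) \<in> P \<and> y \<in> W"
  using P_comp[OF assms(1,2)] assms(3,4) by (auto simp: comp_def)

lemma eventually_in_domain: "(f,U) \<in> P \<Longrightarrow> x \<in> U \<Longrightarrow> \<forall>\<^sub>F z in nhds x. z \<in> U"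
  by (rule eventually_nhds_openI[of U]) (auto dest: P_open)

lemma eventually_nhds_compose:
  assumes "(r,R) \<in> P" "x \<in> R" "\<forall>\<^sub>F z in nhds (r x). Q z"
  shows "\<forall>\<^sub>F z in nhds x. Q (r z)"
proof -
  obtain S where S: "open S" "r x \<in> S" "\<forall>z\<in>S. Q z" using assms(3) eventually_nhds by blast
  have "open (R \<inter> r -` S)"
    using continuous_open_preimage[OF P_continuous P_open] assms(1) S(1) by blast
  then show ?thesis using S assms(2) by (intro eventually_nhds_openI[of "R \<inter> r -` S"]) auto
qed

lemma germ_of_compose_cong:
  assumes "germ_of f x = germ_of g x" "(r,R) \<in> P" "y \<in> R" "r y = x"
  shows "germ_of (\<lambda>w. h (f (r w))) y = germ_of (\<lambda>w. h (g (r w))) y"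
proof (rule germ_of_eqI)
  have "\<forall>\<^sub>F z in nhds (r y). f z = g z" using germ_of_eqD[OF assms(1)] assms(4) by simp
  then show "\<forall>\<^sub>F z in nhds y. h (f (r z)) = h (g (r z))"
    by (rule eventually_mono[OF eventually_nhds_compose[OF assms(2,3)]]) simp
qed


section \<open>The germ topology\<close>

lemma germsI: "(f,U) \<in> P \<Longrightarrow> x \<in> U \<Longrightarrow> germ_of f x \<in> germs P"
  unfolding germs_def by blast

lemma germsE:
  "g \<in> germs P \<Longrightarrow> (\<And>f U x. (f,U) \<in> P \<Longrightarrow> x \<in> U \<Longrightarrow> g = germ_of f x \<Longrightarrow> thesis) \<Longrightarrow> thesis"
  unfolding germs_def by blast

lemma topspace_germ_top [simp]: "topspace (germ_top P) = germs P"
  unfolding germ_top_def germs_def by (auto simp: topology_generated_by_topspace)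

lemma openin_germ_top_basic: "(f,U) \<in> P \<Longrightarrow> openin (germ_top P) (germ_of f ` U)"
  unfolding germ_top_def by (rule topology_generated_by_Basis) (auto simp: Setcompr_eq_image)

lemma germ_of_image_Int:
  assumes f: "(f,U) \<in> P" "x \<in> U" and h: "(h,V) \<in> P" "y \<in> V" and "germ_of f x = germ_of h y"
  shows "\<exists>W. (f,W) \<in> P \<and> x \<in> W \<and> germ_of f ` W \<subseteq> germ_of f ` U \<inter> germ_of h ` V"
proof -
  have "x = y" "\<forall>\<^sub>F z in nhds x. f z = h z" using assms(5) unfolding germ_of_eq_iff by auto
  then obtain N where N: "open N" "x \<in> N" "\<forall>z\<in>N. f z = h z" unfolding eventually_nhds by blast
  define W where "W = U \<inter> V \<inter> N"
  have "open W" unfolding W_def using N(1) P_open[OF f(1)] P_open[OF h(1)] by blast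
  then have "(f, W) \<in> P" using P_restrict[OF f(1)] unfolding W_def by blast
  moreover have "germ_of f ` W \<subseteq> germ_of h ` V"
  proof (rule image_subsetI)
    fix z assume z: "z \<in> W"
    then have "germ_of f z = germ_of h z"
      using N unfolding W_def by (intro germ_of_eqI eventually_nhds_openI[of N]) auto
    then show "germ_of f z \<in> germ_of h ` V" using z unfolding W_def by blast
  qed
  then have "germ_of f ` W \<subseteq> germ_of f ` U \<inter> germ_of h ` V" unfolding W_def by blast
  ultimately show ?thesis using f(2) h(2) N(2) \<open>x = y\<close> unfolding W_def by blast
qed

lemma openin_germ_top_basic_nbhd:
  assumes Ob: "openin (germ_top P) Ob" and "g \<in> Ob"
  shows "\<exists>f U x. (f,U) \<in> P \<and> x \<in> U \<and> g = germ_of f x \<and> germ_of f ` U \<subseteq> Ob"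
proof -
  have "generate_topology_on {{germ_of f x | x. x \<in> U} | f U. (f,U) \<in> P} Ob"
    using Ob unfolding germ_top_def by (simp add: openin_topology_generated_by_iff)
  then have "\<forall>g\<in>Ob. \<exists>f U x. (f,U) \<in> P \<and> x \<in> U \<and> g = germ_of f x \<and> germ_of f ` U \<subseteq> Ob"
  proof (induction rule: generate_topology_on.induct)
    case (Int a b)
    show ?case
    proof
      fix g assume "g \<in> a \<inter> b"
      then obtain f1 U1 x1 where
        1: "(f1,U1) \<in> P" "x1 \<in> U1" "g = germ_of f1 x1" "germ_of f1 ` U1 \<subseteq> a"
        using Int.IH(1) by (meson IntD1)
      obtain f2 U2 x2 where
        2: "(f2,U2) \<in> P" "x2 \<in> U2" "g = germ_of f2 x2" "germ_of f2 ` U2 \<subseteq> b"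
        using Int.IH(2) \<open>g \<in> a \<inter> b\<close> by (meson IntD2)
      obtain W where "(f1,W) \<in> P" "x1 \<in> W" "germ_of f1 ` W \<subseteq> germ_of f1 ` U1 \<inter> germ_of f2 ` U2"
        using germ_of_image_Int[OF 1(1,2) 2(1,2)] 1(3) 2(3) by blast
      then show "\<exists>f U x. (f,U) \<in> P \<and> x \<in> U \<and> g = germ_of f x \<and> germ_of f ` U \<subseteq> a \<inter> b"
        using 1(3,4) 2(4) by blast
    qed
  next
    case (UN K)
    show ?case
    proof
      fix g assume "g \<in> \<Union>K"
      then obtain k where k: "k \<in> K" "g \<in> k" by blast
      then obtain f U x where "(f,U) \<in> P" "x \<in> U" "g = germ_of f x" "germ_of f ` U \<subseteq> k"
        using UN.IH by meson
      then show "\<exists>f U x. (f,U) \<in> P \<and> x \<in> U \<and> g = germ_of f x \<and> germ_of f ` U \<subseteq> \<Union>K"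
        using k by blast
    qed
  next
    case (Basis s)
    then obtain f U where "s = germ_of f ` U" "(f,U) \<in> P" by (auto simp: Setcompr_eq_image)
    then show ?case by blast
  qed simp
  then show ?thesis using \<open>g \<in> Ob\<close> by blast
qed

lemma openin_germ_top_if_basic_nbhds:
  assumes "\<And>g. g \<in> Ob \<Longrightarrow> \<exists>f U x. (f,U) \<in> P \<and> x \<in> U \<and> g = germ_of f x \<and> germ_of f ` U \<subseteq> Ob"
  shows "openin (germ_top P) Ob"
proof -
  have "Ob = \<Union>{germ_of f ` U | f U. (f,U) \<in> P \<and> germ_of f ` U \<subseteq> Ob}"
  proof
    show "Ob \<subseteq> \<Union>{germ_of f ` U | f U. (f,U) \<in> P \<and> germ_of f ` U \<subseteq> Ob}"
    proof
      fix g assume "g \<in> Ob"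
      then obtain f U x where "(f,U) \<in> P" "x \<in> U" "g = germ_of f x" "germ_of f ` U \<subseteq> Ob"
        using assms by metis
      then show "g \<in> \<Union>{germ_of f ` U | f U. (f,U) \<in> P \<and> germ_of f ` U \<subseteq> Ob}" by blast
    qed
  qed blast
  moreover have "openin (germ_top P) (\<Union>{germ_of f ` U | f U. (f,U) \<in> P \<and> germ_of f ` U \<subseteq> Ob})"
    by (rule openin_Union) (auto intro: openin_germ_top_basic)
  ultimately show ?thesis by simp
qed

lemma openin_germ_topI:
  assumes "Ob \<subseteq> germs P"
    and "\<And>f U x. (f,U) \<in> P \<Longrightarrow> x \<in> U \<Longrightarrow> germ_of f x \<in> Ob \<Longrightarrow>
           \<exists>V. open V \<and> x \<in> V \<and> (\<forall>z\<in>V \<inter> U. germ_of f z \<in> Ob)"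
  shows "openin (germ_top P) Ob"
proof (rule openin_germ_top_if_basic_nbhds)
  fix g assume "g \<in> Ob"
  then obtain f U x where fU: "(f,U) \<in> P" "x \<in> U" "g = germ_of f x" using assms(1) germsE by blast
  then obtain V where V: "open V" "x \<in> V" "\<forall>z\<in>V \<inter> U. germ_of f z \<in> Ob"
    using assms(2) \<open>g \<in> Ob\<close> by blast
  have "(f, V \<inter> U) \<in> P" using P_restrict[OF fU(1)] V(1) P_open[OF fU(1)] by auto
  then show "\<exists>f U x. (f,U) \<in> P \<and> x \<in> U \<and> g = germ_of f x \<and> germ_of f ` U \<subseteq> Ob"
    using V fU by blast
qed

lemma openin_germ_topD:
  assumes "openin (germ_top P) Ob" "(f,U) \<in> P" "x \<in> U" "germ_of f x \<in> Ob"
  shows "\<forall>\<^sub>F z in nhds x. germ_of f z \<in> Ob"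
proof -
  obtain f' U' x' where 1: "(f',U') \<in> P" "x' \<in> U'" "germ_of f x = germ_of f' x'" "germ_of f' ` U' \<subseteq> Ob"
    using openin_germ_top_basic_nbhd[OF assms(1,4)] by metis
  then have "x' = x" and "\<forall>\<^sub>F z in nhds x. f z = f' z" using germ_of_eq_iff by metis+
  then obtain V where V: "open V" "x \<in> V" "\<forall>z\<in>V. f z = f' z" unfolding eventually_nhds by blast
  show ?thesis
  proof (rule eventually_nhds_openI[of "V \<inter> U'"])
    show "open (V \<inter> U')" using V(1) P_open[OF 1(1)] by auto
    show "x \<in> V \<inter> U'" using V(2) 1(2) \<open>x' = x\<close> by auto
    fix z assume z: "z \<in> V \<inter> U'"
    have "germ_of f z = germ_of f' z" using V z by (intro germ_of_eqI eventually_nhds_openI[of V]) auto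
    then show "germ_of f z \<in> Ob" using 1 z by auto
  qed
qed

lemma continuous_map_germ_of:
  assumes "(F,W) \<in> P"
  shows "continuous_map (top_of_set W) (germ_top P) (germ_of F)"
  unfolding continuous_map
proof (intro conjI allI impI)
  show "germ_of F ` topspace (top_of_set W) \<subseteq> topspace (germ_top P)"
    using assms germsI by auto
  fix Ob assume Ob: "openin (germ_top P) Ob"
  have "open {x \<in> W. germ_of F x \<in> Ob}"
  proof (subst open_subopen, intro ballI)
    fix x assume "x \<in> {x \<in> W. germ_of F x \<in> Ob}"
    then have "\<forall>\<^sub>F z in nhds x. germ_of F z \<in> Ob \<and> z \<in> W"
      using openin_germ_topD[OF Ob assms] eventually_in_domain[OF assms] eventually_conj by blast
    then show "\<exists>T. open T \<and> x \<in> T \<and> T \<subseteq> {x \<in> W. germ_of F x \<in> Ob}"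
      unfolding eventually_nhds by blast
  qed
  then show "openin (top_of_set W) {x \<in> topspace (top_of_set W). germ_of F x \<in> Ob}"
    by (auto simp: openin_open)
qed

lemma compactin_germ_of_image:
  assumes "(F,W) \<in> P" "compact K" "K \<subseteq> W"
  shows "compactin (germ_top P) (germ_of F ` K)"
  using image_compactin[OF _ continuous_map_germ_of[OF assms(1)]] assms(2,3)
  by (simp add: compactin_subtopology)

lemma continuous_map_gsrc: "continuous_map (germ_top P) euclidean gsrc"
  unfolding continuous_map
proof (intro conjI allI impI)
  fix Ob :: "'a set" assume "openin euclidean Ob"
  then show "openin (germ_top P) {x \<in> topspace (germ_top P). gsrc x \<in> Ob}"
    by (intro openin_germ_topI) (auto intro: germsI)
qed auto

lemma continuous_map_gtgt: "continuous_map (germ_top P) euclidean gtgt"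
  unfolding continuous_map
proof (intro conjI allI impI)
  fix Ob :: "'a set" assume "openin euclidean Ob"
  then have Ob: "open Ob" by simp
  show "openin (germ_top P) {x \<in> topspace (germ_top P). gtgt x \<in> Ob}"
  proof (rule openin_germ_topI)
    fix f U x assume fU: "(f,U) \<in> P" "x \<in> U" "germ_of f x \<in> {x \<in> topspace (germ_top P). gtgt x \<in> Ob}"
    have "open (U \<inter> f -` Ob)" using continuous_open_preimage[OF P_continuous P_open] fU(1) Ob by blast
    then show "\<exists>V. open V \<and> x \<in> V \<and> (\<forall>z\<in>V \<inter> U. germ_of f z \<in> {x \<in> topspace (germ_top P). gtgt x \<in> Ob})"
      using fU by (intro exI[of _ "U \<inter> f -` Ob"]) (auto intro: germsI)
  qed auto
qed auto

lemma compact_ends: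
  assumes "compactin (germ_top P) S"
  shows "compact (gsrc ` S \<union> gtgt ` S)"
  using image_compactin[OF assms continuous_map_gsrc] image_compactin[OF assms continuous_map_gtgt]
  by (simp add: compact_Un)


section \<open>Conjugation of germs\<close>

definition germs_between :: "'a set \<Rightarrow> 'a set \<Rightarrow> 'a germ set" where
  "germs_between A B = {g \<in> germs P. gsrc g \<in> A \<and> gtgt g \<in> B}"

text \<open>The conjugate b g a\<inverse> of a germ g by two pseudogroup elements; it is only meaningful
  for g in germs_between Ua Ub.\<close>

definition conj_germ :: "('a \<Rightarrow> 'a) \<Rightarrow> 'a set \<Rightarrow> ('a \<Rightarrow> 'a) \<Rightarrow> 'a germ \<Rightarrow> 'a germ" where
  "conj_germ a Ua b g = germ_of (\<lambda>w. b ((SOME h. h \<in> snd g) (inv_into Ua a w))) (a (gsrc g))"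

lemma closedin_germs_between:
  assumes "closed A" "closed B"
  shows "closedin (germ_top P) (germs_between A B)"
proof -
  have "germs_between A B = {g \<in> topspace (germ_top P). gsrc g \<in> A} \<inter> {g \<in> topspace (germ_top P). gtgt g \<in> B}"
    unfolding germs_between_def by auto
  then show ?thesis
    using closedin_continuous_map_preimage[OF continuous_map_gsrc, of A]
      closedin_continuous_map_preimage[OF continuous_map_gtgt, of B] assms
    by auto
qed

lemma conj_germ_of:
  assumes "(a,Ua) \<in> P" "x \<in> Ua"
  shows "conj_germ a Ua b (germ_of f x) = germ_of (\<lambda>w. b (f (inv_into Ua a w))) (a x)"
  unfolding conj_germ_def gsrc_germ_of
  by (rule germ_of_compose_cong[OF germ_of_representative P_inv[OF assms(1)]])
    (use assms P_inv_into_f in auto)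

lemma conj_map_in_P:
  assumes "(a,Ua) \<in> P" "(b,Ub) \<in> P" "(f,U) \<in> P" "x \<in> Ua" "x \<in> U" "f x \<in> Ub"
  shows "\<exists>W. ((\<lambda>w. b (f (inv_into Ua a w))), W) \<in> P \<and> a x \<in> W"
proof -
  have ax: "inv_into Ua a (a x) = x" using assms(1,4) by (rule P_inv_into_f)
  have "a x \<in> a ` Ua" using assms(4) by blast
  then obtain W where W: "((\<lambda>w. f (inv_into Ua a w)), W) \<in> P" "a x \<in> W"
    using P_compose_at[OF P_inv[OF assms(1)] assms(3), of "a x"] assms(5) ax by auto
  show ?thesis using P_compose_at[OF W(1) assms(2) W(2)] assms(6) ax by simp
qed

lemma conj_germ_germs_between:
  assumes "(a,Ua) \<in> P" "(b,Ub) \<in> P" "g \<in> germs_between Ua Ub"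
  shows "conj_germ a Ua b g \<in> germs P"
    and "gsrc (conj_germ a Ua b g) = a (gsrc g)" "gtgt (conj_germ a Ua b g) = b (gtgt g)"
proof -
  obtain f U x where fU: "(f,U) \<in> P" "x \<in> U" "g = germ_of f x" "x \<in> Ua" "f x \<in> Ub"
    using assms(3) unfolding germs_between_def by (auto elim: germsE)
  then obtain W where "((\<lambda>w. b (f (inv_into Ua a w))), W) \<in> P" "a x \<in> W"
    using conj_map_in_P[OF assms(1,2) fU(1)] by blast
  then show "conj_germ a Ua b g \<in> germs P"
    using fU conj_germ_of[OF assms(1)] germsI by auto
  show "gsrc (conj_germ a Ua b g) = a (gsrc g)" "gtgt (conj_germ a Ua b g) = b (gtgt g)"
    using fU conj_germ_of[OF assms(1)] P_inv_into_f[OF assms(1)] by auto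
qed

lemma conj_germ_in_restr:
  assumes "(a,Ua) \<in> P" "(b,Ub) \<in> P" "a ` Ua \<subseteq> T" "b ` Ub \<subseteq> T" "g \<in> germs_between Ua Ub"
  shows "conj_germ a Ua b g \<in> restr P T"
  using conj_germ_germs_between[OF assms(1,2,5)] assms(3-5)
  unfolding restr_def germs_between_def by auto

lemma openin_conj_germ_preimage:
  assumes a: "(a,Ua) \<in> P" and b: "(b,Ub) \<in> P" and "open A" "A \<subseteq> Ua" "open B" "B \<subseteq> Ub"
    and Ob: "openin (germ_top P) Ob"
  shows "openin (germ_top P) {g \<in> germs_between A B. conj_germ a Ua b g \<in> Ob}"
proof (rule openin_germ_topI)
  show "{g \<in> germs_between A B. conj_germ a Ua b g \<in> Ob} \<subseteq> germs P"
    unfolding germs_between_def by auto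
  fix f U x
  assume fU: "(f,U) \<in> P" "x \<in> U" and gin: "germ_of f x \<in> {g \<in> germs_between A B. conj_germ a Ua b g \<in> Ob}"
  have xA: "x \<in> A" and fxB: "f x \<in> B" using gin unfolding germs_between_def by auto
  have xUa: "x \<in> Ua" using xA assms(4) by blast
  have fxUb: "f x \<in> Ub" using fxB assms(6) by blast
  define c where "c = (\<lambda>w. b (f (inv_into Ua a w)))"
  obtain Wc where Wc: "(c, Wc) \<in> P" "a x \<in> Wc"
    using conj_map_in_P[OF a b fU(1) xUa fU(2) fxUb] unfolding c_def by blast
  have "germ_of c (a x) \<in> Ob" using gin conj_germ_of[OF a xUa] unfolding c_def by auto
  then have "\<forall>\<^sub>F z in nhds x. germ_of c (a z) \<in> Ob"
    by (intro eventually_nhds_compose[OF a xUa] openin_germ_topD[OF Ob Wc])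
  moreover have "\<forall>\<^sub>F z in nhds x. z \<in> A" by (rule eventually_nhds_openI[OF \<open>open A\<close> xA])
  moreover have "\<forall>\<^sub>F z in nhds x. f z \<in> B"
    by (intro eventually_nhds_compose[OF fU] eventually_nhds_openI[OF \<open>open B\<close> fxB])
  ultimately have "\<forall>\<^sub>F z in nhds x. germ_of c (a z) \<in> Ob \<and> z \<in> A \<and> f z \<in> B"
    by (intro eventually_conj)
  then obtain V where V: "open V" "x \<in> V" "\<forall>z\<in>V. germ_of c (a z) \<in> Ob \<and> z \<in> A \<and> f z \<in> B"
    unfolding eventually_nhds by blast
  have "germ_of f z \<in> {g \<in> germs_between A B. conj_germ a Ua b g \<in> Ob}" if z: "z \<in> V \<inter> U" for z
  proof -
    have "z \<in> A" "f z \<in> B" "germ_of c (a z) \<in> Ob" using V z by auto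
    moreover have "conj_germ a Ua b (germ_of f z) = germ_of c (a z)"
      unfolding c_def using conj_germ_of[OF a] \<open>z \<in> A\<close> assms(4) by blast
    ultimately show ?thesis using germsI[OF fU(1)] z unfolding germs_between_def by auto
  qed
  then show "\<exists>V. open V \<and> x \<in> V \<and> (\<forall>z\<in>V \<inter> U. germ_of f z \<in> {g \<in> germs_between A B. conj_germ a Ua b g \<in> Ob})"
    using V(1,2) by blast
qed

lemma compactin_conj_germ_image:
  assumes S: "compactin (germ_top P) S" and a: "(a,Ua) \<in> P" and b: "(b,Ub) \<in> P"
    and "compact Ca" "Ca \<subseteq> Ua" "compact Cb" "Cb \<subseteq> Ub"
  shows "compactin (germ_top P) (conj_germ a Ua b ` (S \<inter> germs_between Ca Cb))"
proof -
  have "closedin (germ_top P) (germs_between Ca Cb)"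
    by (intro closedin_germs_between compact_imp_closed assms(4,6))
  then have "compactin (germ_top P) (S \<inter> germs_between Ca Cb)"
    by (rule compact_Int_closedin[OF S])
  moreover have "S \<inter> germs_between Ca Cb \<subseteq> germs_between Ua Ub"
    using assms(5,7) unfolding germs_between_def by auto
  ultimately have K: "compactin (subtopology (germ_top P) (germs_between Ua Ub)) (S \<inter> germs_between Ca Cb)"
    by (simp add: compactin_subtopology)
  have "continuous_map (subtopology (germ_top P) (germs_between Ua Ub)) (germ_top P) (conj_germ a Ua b)"
    unfolding continuous_map
  proof (intro conjI allI impI)
    show "conj_germ a Ua b ` topspace (subtopology (germ_top P) (germs_between Ua Ub)) \<subseteq> topspace (germ_top P)"
      using conj_germ_germs_between(1)[OF a b] by auto
    fix Ob assume "openin (germ_top P) Ob"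
    then have "openin (germ_top P) {g \<in> germs_between Ua Ub. conj_germ a Ua b g \<in> Ob}"
      by (rule openin_conj_germ_preimage[OF a b P_open[OF a] order_refl P_open[OF b] order_refl])
    moreover have "{g \<in> topspace (subtopology (germ_top P) (germs_between Ua Ub)). conj_germ a Ua b g \<in> Ob}
        = germs_between Ua Ub \<inter> {g \<in> germs_between Ua Ub. conj_germ a Ua b g \<in> Ob}"
      unfolding germs_between_def by auto
    ultimately show "openin (subtopology (germ_top P) (germs_between Ua Ub))
        {g \<in> topspace (subtopology (germ_top P) (germs_between Ua Ub)). conj_germ a Ua b g \<in> Ob}"
      by (simp add: openin_subtopology_Int2)
  qed
  then show ?thesis by (rule image_compactin[OF K])
qed


section \<open>Products and inverses of germs\<close>

lemma gmulI:
  assumes "(f,U) \<in> P" "(h,V) \<in> P" "x \<in> V" "h x \<in> U" "germ_of f (h x) \<in> A" "germ_of h x \<in> B"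
  shows "germ_of (\<lambda>w. f (h w)) x \<in> gmul P A B"
  using assms unfolding gmul_def comp_def by blast

lemma gmulE:
  assumes "e \<in> gmul P A B"
  obtains f U h V x where "(f,U) \<in> P" "(h,V) \<in> P" "x \<in> V" "h x \<in> U" "germ_of f (h x) \<in> A"
    "germ_of h x \<in> B" "e = germ_of (\<lambda>w. f (h w)) x"
  using assms unfolding gmul_def by (auto simp: comp_def)

lemma gmul_mono: "A \<subseteq> A' \<Longrightarrow> B \<subseteq> B' \<Longrightarrow> gmul P A B \<subseteq> gmul P A' B'"
  unfolding gmul_def by blast

lemma ginv_mono: "A \<subseteq> B \<Longrightarrow> ginv P A \<subseteq> ginv P B"
  unfolding ginv_def by blast

lemma ginv_subset_germs: "ginv P A \<subseteq> germs P"
proof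
  fix g assume "g \<in> ginv P A"
  then obtain f U x where "(f,U) \<in> P" "x \<in> U" "g = germ_of (inv_into U f) (f x)"
    unfolding ginv_def by blast
  then show "g \<in> germs P" using germsI[OF P_inv] by simp
qed

lemma gmul_assoc_subset: "gmul P (gmul P A B) C \<subseteq> gmul P A (gmul P B C)"
proof
  fix e assume "e \<in> gmul P (gmul P A B) C"
  then obtain f U h V x where e: "(f,U) \<in> P" "(h,V) \<in> P" "x \<in> V" "h x \<in> U"
      "germ_of f (h x) \<in> gmul P A B" "germ_of h x \<in> C" "e = germ_of (\<lambda>w. f (h w)) x"
    by (rule gmulE)
  from e(5) obtain f1 U1 f2 U2 y where f: "(f1,U1) \<in> P" "(f2,U2) \<in> P" "y \<in> U2" "f2 y \<in> U1"
      "germ_of f1 (f2 y) \<in> A" "germ_of f2 y \<in> B" "germ_of f (h x) = germ_of (\<lambda>w. f1 (f2 w)) y"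
    by (rule gmulE)
  have y: "y = h x" using f(7) unfolding germ_of_eq_iff by simp
  have "germ_of (\<lambda>w. f2 (h w)) x \<in> gmul P B C"
    using gmulI[OF f(2) e(2,3)] f(3,6) e(6) y by simp
  moreover obtain W where "((\<lambda>w. f2 (h w)), W) \<in> P" "x \<in> W"
    using P_compose_at[OF e(2) f(2) e(3)] f(3) y by blast
  ultimately have "germ_of (\<lambda>w. f1 (f2 (h w))) x \<in> gmul P A (gmul P B C)"
    using gmulI[OF f(1)] f(4,5) y by simp
  moreover have "germ_of (\<lambda>w. f (h w)) x = germ_of (\<lambda>w. f1 (f2 (h w))) x"
    using germ_of_compose_cong[OF _ e(2,3) refl, where h = "\<lambda>u. u"] f(7) y by simp
  ultimately show "e \<in> gmul P A (gmul P B C)" using e(7) by simp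
qed

lemma gpow_1_subset: "gpow P A 1 \<subseteq> A"
proof
  fix e assume "e \<in> gpow P A 1"
  then have "e \<in> gmul P A (gpow P A 0)" by simp
  then obtain f U h V x where "(f,U) \<in> P" "(h,V) \<in> P" "x \<in> V" "h x \<in> U"
      and e: "germ_of f (h x) \<in> A" "germ_of h x \<in> gpow P A 0" "e = germ_of (\<lambda>w. f (h w)) x"
    by (rule gmulE)
  then obtain z where "germ_of h x = germ_of id z" by auto
  then have h: "\<forall>\<^sub>F w in nhds x. h w = w" unfolding germ_of_eq_iff by auto
  then have "\<forall>\<^sub>F w in nhds x. f (h w) = f w" by (rule eventually_mono) simp
  then have "e = germ_of f x" using e(3) germ_of_eqI by simp
  then show "e \<in> A" using e(1) eventually_nhds_x_imp_x[OF h] by simp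
qed

lemma gpow_1I:
  assumes "g \<in> germs P" "g \<in> A"
  shows "g \<in> gpow P A 1"
proof -
  obtain f U x where fU: "(f,U) \<in> P" "x \<in> U" "g = germ_of f x" using assms(1) by (rule germsE)
  have "germ_of (\<lambda>w. f (id w)) x \<in> gmul P A (gpow P A 0)"
    by (rule gmulI[OF fU(1) P_id]) (use fU assms(2) in auto)
  then show ?thesis using fU(3) by simp
qed

lemma gmul_gpow_subset: "gmul P (gpow P A n) A \<subseteq> gpow P A (Suc n)"
proof (induction n)
  case 0
  show ?case
  proof
    fix e assume "e \<in> gmul P (gpow P A 0) A"
    then obtain f U h V x where e: "(h,V) \<in> P" "x \<in> V" "germ_of f (h x) \<in> gpow P A 0"
        "germ_of h x \<in> A" "e = germ_of (\<lambda>w. f (h w)) x"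
      by (elim gmulE) blast
    from e(3) have "germ_of f (h x) = germ_of (\<lambda>u. u) (h x)" by (auto simp: germ_of_eq_iff id_def)
    then have "e = germ_of h x"
      using germ_of_compose_cong[OF _ e(1,2) refl, where h = "\<lambda>u. u"] e(5) by simp
    then show "e \<in> gpow P A (Suc 0)" using gpow_1I[OF germsI[OF e(1,2)] e(4)] by simp
  qed
next
  case (Suc n)
  have "gmul P (gpow P A (Suc n)) A \<subseteq> gmul P A (gmul P (gpow P A n) A)"
    using gmul_assoc_subset by simp
  also have "\<dots> \<subseteq> gmul P A (gpow P A (Suc n))"
    using Suc.IH by (intro gmul_mono) auto
  finally show ?case by simp
qed

lemma gmul_ginv_left:
  assumes \<rho>: "(\<rho>,R) \<in> P" and f: "(f,U) \<in> P" "x \<in> U" and "f x \<in> R"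
    and "germ_of \<rho> (f x) \<in> A" "germ_of (\<lambda>w. \<rho> (f w)) x \<in> B"
  shows "germ_of f x \<in> gmul P (ginv P A) B"
proof -
  obtain W where W: "((\<lambda>w. \<rho> (f w)), W) \<in> P" "x \<in> W"
    using P_compose_at[OF f(1) \<rho> f(2) \<open>f x \<in> R\<close>] by blast
  have "germ_of (inv_into R \<rho>) (\<rho> (f x)) \<in> ginv P A"
    unfolding ginv_def using \<rho> assms(4,5) by blast
  then have "germ_of (\<lambda>w. inv_into R \<rho> (\<rho> (f w))) x \<in> gmul P (ginv P A) B"
    using gmulI[OF P_inv[OF \<rho>] W] assms(4,6) by auto
  moreover have "\<forall>\<^sub>F w in nhds x. f w \<in> R"
    by (rule eventually_nhds_compose[OF f eventually_in_domain[OF \<rho> \<open>f x \<in> R\<close>]])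
  then have "germ_of (\<lambda>w. inv_into R \<rho> (\<rho> (f w))) x = germ_of f x"
    by (auto intro: germ_of_eqI elim!: eventually_mono simp: P_inv_into_f[OF \<rho>])
  ultimately show ?thesis by simp
qed

lemma germ_in_ginvI:
  assumes f: "(f,W) \<in> P" "x \<in> W" and "germ_of f x \<in> A" and h: "(h,N) \<in> P" "f x \<in> N"
    and "h (f x) = x" "\<forall>\<^sub>F w in nhds (f x). f (h w) = w"
  shows "germ_of h (f x) \<in> ginv P A"
proof -
  have "\<forall>\<^sub>F w in nhds (f x). h w \<in> W"
    using eventually_nhds_compose[OF h, of "\<lambda>z. z \<in> W"] eventually_in_domain[OF f] assms(6) by simp
  with assms(7) have "\<forall>\<^sub>F w in nhds (f x). inv_into W f w = h w"
    by eventually_elim (metis P_inv_into_f[OF f(1)])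
  then have "\<forall>\<^sub>F w in nhds (f x). h w = inv_into W f w" by (rule eventually_mono) simp
  then have "germ_of h (f x) = germ_of (inv_into W f) (f x)" by (rule germ_of_eqI)
  then show ?thesis unfolding ginv_def using f assms(3) by blast
qed

lemma conj_germ_ginv:
  assumes a: "(a,Ua) \<in> P" and b: "(b,Ub) \<in> P" and f: "(f,U) \<in> P" "y \<in> U"
    and "y \<in> Ub" "f y \<in> Ua"
  shows "conj_germ a Ua b (germ_of (inv_into U f) (f y)) \<in> ginv P {conj_germ b Ub a (germ_of f y)}"
proof -
  define ia where "ia = inv_into Ua a"
  define ib where "ib = inv_into Ub b"
  define \<phi> where "\<phi> = (\<lambda>w. a (f (ib w)))"
  define \<psi> where "\<psi> = (\<lambda>w. b (inv_into U f (ia w)))"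
  have ia: "ia (a (f y)) = f y" and ib: "ib (b y) = y" and fy: "inv_into U f (f y) = y"
    unfolding ia_def ib_def using P_inv_into_f a b f assms(5,6) by auto
  obtain W\<phi> where W\<phi>: "(\<phi>, W\<phi>) \<in> P" "b y \<in> W\<phi>"
    using conj_map_in_P[OF b a f(1) assms(5) f(2) assms(6)] unfolding \<phi>_def ib_def by blast
  obtain W\<psi> where W\<psi>: "(\<psi>, W\<psi>) \<in> P" "a (f y) \<in> W\<psi>"
    using conj_map_in_P[OF a b P_inv[OF f(1)] assms(6)] f(2) fy assms(5) unfolding \<psi>_def ia_def by auto
  have \<phi>y: "\<phi> (b y) = a (f y)" and \<psi>y: "\<psi> (a (f y)) = b y"
    unfolding \<phi>_def \<psi>_def using ia ib fy by auto
  have "\<forall>\<^sub>F w in nhds (a (f y)). w \<in> a ` Ua"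
    using eventually_in_domain[OF P_inv[OF a]] assms(6) by blast
  moreover have "\<forall>\<^sub>F w in nhds (a (f y)). ia w \<in> f ` U"
    using eventually_nhds_compose[OF P_inv[OF a], of "a (f y)" "\<lambda>z. z \<in> f ` U"]
      eventually_in_domain[OF P_inv[OF f(1)]] assms(6) f(2) ia unfolding ia_def by auto
  moreover obtain W where "((\<lambda>w. inv_into U f (ia w)), W) \<in> P" "a (f y) \<in> W"
    using P_compose_at[OF P_inv[OF a] P_inv[OF f(1)], of "a (f y)"] assms(6) f(2) ia
    unfolding ia_def by auto
  then have "\<forall>\<^sub>F w in nhds (a (f y)). inv_into U f (ia w) \<in> Ub"
    using eventually_nhds_compose[of _ W "a (f y)" "\<lambda>z. z \<in> Ub"] eventually_in_domain[OF b assms(5)]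
      ia fy by auto
  ultimately have "\<forall>\<^sub>F w in nhds (\<phi> (b y)). \<phi> (\<psi> w) = w"
    unfolding \<phi>y
    by eventually_elim (simp add: \<phi>_def \<psi>_def ib_def ia_def P_inv_into_f[OF b] f_inv_into_f)
  then have "germ_of \<psi> (\<phi> (b y)) \<in> ginv P {germ_of \<phi> (b y)}"
    by (intro germ_in_ginvI[OF W\<phi>]) (use W\<psi> \<phi>y \<psi>y in auto)
  moreover have "conj_germ b Ub a (germ_of f y) = germ_of \<phi> (b y)"
    unfolding \<phi>_def ib_def using conj_germ_of[OF b assms(5)] .
  moreover have "conj_germ a Ua b (germ_of (inv_into U f) (f y)) = germ_of \<psi> (a (f y))"
    unfolding \<psi>_def ia_def using conj_germ_of[OF a assms(6)] .
  ultimately show ?thesis using \<phi>y by simp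
qed

lemma conj_germ_gmul:
  assumes a: "(a,Ua) \<in> P" and b: "(b,Ub) \<in> P" and c: "(c,Uc) \<in> P"
    and f: "(f,U) \<in> P" and h: "(h,V) \<in> P" "x \<in> V" "h x \<in> U"
    and "x \<in> Ua" "h x \<in> Ub" "f (h x) \<in> Uc"
  shows "conj_germ a Ua c (germ_of (\<lambda>w. f (h w)) x)
    \<in> gmul P {conj_germ b Ub c (germ_of f (h x))} {conj_germ a Ua b (germ_of h x)}"
proof -
  define ia where "ia = inv_into Ua a"
  define ib where "ib = inv_into Ub b"
  define \<alpha> where "\<alpha> = (\<lambda>v. c (f (ib v)))"
  define \<beta> where "\<beta> = (\<lambda>w. b (h (ia w)))"
  have ia: "ia (a x) = x" unfolding ia_def using P_inv_into_f[OF a assms(8)] .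
  obtain W\<alpha> where W\<alpha>: "(\<alpha>, W\<alpha>) \<in> P" "b (h x) \<in> W\<alpha>"
    using conj_map_in_P[OF b c f assms(9) h(3) assms(10)] unfolding \<alpha>_def ib_def by blast
  obtain W\<beta> where W\<beta>: "(\<beta>, W\<beta>) \<in> P" "a x \<in> W\<beta>"
    using conj_map_in_P[OF a b h(1) assms(8) h(2) assms(9)] unfolding \<beta>_def ia_def by blast
  have \<beta>x: "\<beta> (a x) = b (h x)" unfolding \<beta>_def using ia by simp
  have "conj_germ b Ub c (germ_of f (h x)) = germ_of \<alpha> (\<beta> (a x))"
    unfolding \<beta>x \<alpha>_def ib_def using conj_germ_of[OF b assms(9)] .
  moreover have "conj_germ a Ua b (germ_of h x) = germ_of \<beta> (a x)"
    unfolding \<beta>_def ia_def using conj_germ_of[OF a assms(8)] .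
  ultimately have "germ_of (\<lambda>w. \<alpha> (\<beta> w)) (a x)
      \<in> gmul P {conj_germ b Ub c (germ_of f (h x))} {conj_germ a Ua b (germ_of h x)}"
    using gmulI[OF W\<alpha>(1) W\<beta>] W\<alpha>(2) \<beta>x by simp
  moreover have "conj_germ a Ua c (germ_of (\<lambda>w. f (h w)) x) = germ_of (\<lambda>w. \<alpha> (\<beta> w)) (a x)"
  proof -
    obtain W where W: "((\<lambda>w. h (ia w)), W) \<in> P" "a x \<in> W"
      using P_compose_at[OF P_inv[OF a] h(1), of "a x"] assms(8) h(2) ia unfolding ia_def by auto
    have "\<forall>\<^sub>F w in nhds (a x). h (ia w) \<in> Ub"
      using eventually_nhds_compose[OF W, of "\<lambda>z. z \<in> Ub"] eventually_in_domain[OF b assms(9)] ia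
      by simp
    then have "\<forall>\<^sub>F w in nhds (a x). c (f (h (ia w))) = \<alpha> (\<beta> w)"
      by (rule eventually_mono) (simp add: \<alpha>_def \<beta>_def ib_def P_inv_into_f[OF b])
    then show ?thesis
      using conj_germ_of[OF a assms(8), of c "\<lambda>w. f (h w)"] germ_of_eqI unfolding ia_def by simp
  qed
  ultimately show ?thesis by simp
qed

lemma conj_germ_conj_germ:
  assumes a: "(a,Ua) \<in> P" and b: "(b,Ub) \<in> P" and c: "(c,Uc) \<in> P" and d: "(d,Ud) \<in> P"
    and "x \<in> Ua" "a x \<in> Uc" "f x \<in> Ub" "b (f x) \<in> Ud"
  shows "conj_germ c Uc d (conj_germ a Ua b (germ_of f x))
    = conj_germ (\<lambda>w. c (a w)) (Ua \<inter> a -` Uc) (\<lambda>w. d (b w)) (germ_of f x)"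
proof -
  define ia where "ia = inv_into Ua a"
  define ic where "ic = inv_into Uc c"
  define iac where "iac = inv_into (Ua \<inter> a -` Uc) (\<lambda>w. c (a w))"
  have ca: "((\<lambda>w. c (a w)), Ua \<inter> a -` Uc) \<in> P" using P_comp[OF a c] by (simp add: comp_def)
  have "\<forall>\<^sub>F w in nhds (c (a x)). w \<in> c ` Uc"
    using eventually_in_domain[OF P_inv[OF c]] assms(6) by blast
  moreover have "\<forall>\<^sub>F w in nhds (c (a x)). ic w \<in> a ` Ua"
    using eventually_nhds_compose[OF P_inv[OF c], of "c (a x)" "\<lambda>z. z \<in> a ` Ua"]
      eventually_in_domain[OF P_inv[OF a]] assms(5,6) P_inv_into_f[OF c assms(6)]
    unfolding ic_def by auto
  ultimately have "\<forall>\<^sub>F w in nhds (c (a x)). iac w = ia (ic w)"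
  proof eventually_elim
    case (elim w)
    have "ic w \<in> Uc" "c (ic w) = w"
      using elim(1) unfolding ic_def by (simp_all add: inv_into_into f_inv_into_f)
    moreover have "ia (ic w) \<in> Ua" "a (ia (ic w)) = ic w"
      using elim(2) unfolding ia_def by (simp_all add: inv_into_into f_inv_into_f)
    ultimately have "ia (ic w) \<in> Ua \<inter> a -` Uc" "c (a (ia (ic w))) = w" by auto
    then show ?case unfolding iac_def using P_inv_into_f[OF ca] by metis
  qed
  then have "\<forall>\<^sub>F w in nhds (c (a x)). d (b (f (ia (ic w)))) = d (b (f (iac w)))"
    by (rule eventually_mono) simp
  then show ?thesis
    using conj_germ_of[OF a assms(5), of b f] conj_germ_of[OF c assms(6)] conj_germ_of[OF ca, of x]
      assms(5,6) germ_of_eqI unfolding ia_def ic_def iac_def by simp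
qed

lemma germ_of_conj_decomposition:
  assumes a: "(a,Ua) \<in> P" and b: "(b,Ub) \<in> P" and f: "(f,U) \<in> P" "x \<in> U" and "x \<in> Ua" "f x \<in> Ub"
  shows "germ_of f x
    \<in> gmul P (ginv P {germ_of b (f x)}) (gmul P {conj_germ a Ua b (germ_of f x)} {germ_of a x})"
proof -
  define \<epsilon> where "\<epsilon> = (\<lambda>w. b (f (inv_into Ua a w)))"
  obtain W where W: "(\<epsilon>, W) \<in> P" "a x \<in> W"
    using conj_map_in_P[OF a b f(1) assms(5) f(2) assms(6)] unfolding \<epsilon>_def by blast
  have "germ_of (\<lambda>w. \<epsilon> (a w)) x \<in> gmul P {conj_germ a Ua b (germ_of f x)} {germ_of a x}"
    using gmulI[OF W(1) a assms(5) W(2)] conj_germ_of[OF a assms(5)] unfolding \<epsilon>_def by simp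
  moreover have "\<forall>\<^sub>F w in nhds x. \<epsilon> (a w) = b (f w)"
    using eventually_in_domain[OF a assms(5)] by (rule eventually_mono) (simp add: \<epsilon>_def P_inv_into_f[OF a])
  ultimately have "germ_of (\<lambda>w. b (f w)) x \<in> gmul P {conj_germ a Ua b (germ_of f x)} {germ_of a x}"
    using germ_of_eqI by metis
  then show ?thesis by (intro gmul_ginv_left[OF b f assms(6)]) simp_all
qed


section \<open>Charts\<close>

definition chart_into :: "'a set \<Rightarrow> ('a \<Rightarrow> 'a) \<Rightarrow> 'a set \<Rightarrow> 'a set \<Rightarrow> 'a set \<Rightarrow> bool" where
  "chart_into T f U V C \<longleftrightarrow> (f,U) \<in> P \<and> f ` U \<subseteq> T \<and> open V \<and> compact C \<and> V \<subseteq> C \<and> C \<subseteq> U"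

lemma chart_into_at:
  assumes lc: "locally_compact_space (euclidean :: 'a topology)"
    and "open T" "g \<in> germs P" "gtgt g \<in> T"
  shows "\<exists>f U V C. chart_into T f U V C \<and> gsrc g \<in> V"
proof -
  obtain f U0 x where fU: "(f,U0) \<in> P" "x \<in> U0" "g = germ_of f x" using assms(3) by (rule germsE)
  define U where "U = U0 \<inter> f -` T"
  have "open U"
    unfolding U_def by (rule continuous_open_preimage[OF P_continuous[OF fU(1)] P_open[OF fU(1)] assms(2)])
  then have "(f,U) \<in> P" using P_restrict[OF fU(1)] unfolding U_def by blast
  moreover have "x \<in> U" using fU assms(4) unfolding U_def by simp
  moreover have "neighbourhood_base_of (compactin euclidean) (euclidean :: 'a topology)"
    using locally_compact_space_neighbourhood_base[of "euclidean :: 'a topology"] lc by simp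
  then obtain V C where "openin euclidean V" "compactin euclidean C" "x \<in> V" "V \<subseteq> C" "C \<subseteq> U"
    using \<open>open U\<close> \<open>x \<in> U\<close> unfolding neighbourhood_base_of by (meson open_openin)
  moreover have "f ` U \<subseteq> T" unfolding U_def by blast
  ultimately show ?thesis using fU(3) unfolding chart_into_def by auto
qed

lemma chart_family:
  assumes lc: "locally_compact_space (euclidean :: 'a topology)"
    and "top_transversal P T" "compact K"
  obtains I :: "'a set" and V f U C where "finite I" "K \<subseteq> (\<Union>i\<in>I. V i)"
    "\<And>i. chart_into T (f i) (U i) (V i) (C i)"
proof -
  obtain T0 where T0: "open T0" "T0 \<subseteq> T" "\<forall>x. \<exists>g\<in>germs P. gsrc g = x \<and> gtgt g \<in> T0"
    using assms(2) unfolding top_transversal_def by blast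
  have "\<forall>x. \<exists>f U V C. chart_into T f U V C \<and> x \<in> V"
  proof
    fix x
    obtain g where "g \<in> germs P" "gsrc g = x" "gtgt g \<in> T0" using T0(3) by blast
    then obtain f U V C where "chart_into T0 f U V C" "x \<in> V"
      using chart_into_at[OF lc T0(1)] by blast
    then show "\<exists>f U V C. chart_into T f U V C \<and> x \<in> V"
      using T0(2) unfolding chart_into_def by (meson order_trans)
  qed
  then have "\<exists>f U V C. \<forall>x. chart_into T (f x) (U x) (V x) (C x) \<and> x \<in> V x"
    by (simp only: choice_iff)
  then obtain f U V C where ch: "\<And>x. chart_into T (f x) (U x) (V x) (C x) \<and> x \<in> V x"
    by blast
  obtain I where "I \<subseteq> K" "finite I" "K \<subseteq> (\<Union>i\<in>I. V i)"
  proof (rule compactE_image[OF assms(3), of K V])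
    show "\<And>x. x \<in> K \<Longrightarrow> open (V x)" using ch unfolding chart_into_def by blast
    show "K \<subseteq> (\<Union>x\<in>K. V x)" using ch by blast
  qed blast
  then show ?thesis using that ch by blast
qed

end


section \<open>Changing the transversal\<close>

locale transversal_change = germ_groupoid P for P :: "(('a::metric_space \<Rightarrow> 'a) \<times> 'a set) set" +
  fixes S0 :: "'a germ set" and Y X :: "'a set"
    and k l :: "'a \<Rightarrow> 'a \<Rightarrow> 'a" and Uk Vk Ck Ul Vl Cl :: "'a \<Rightarrow> 'a set" and I J :: "'a set"
  assumes generating: "compact_generating_pair P S0 Y"
    and compact_X: "compact X"
    and k_chart: "\<And>i. chart_into X (k i) (Uk i) (Vk i) (Ck i)"
    and finite_I: "finite I" and I_cover: "Y \<union> gsrc ` S0 \<union> gtgt ` S0 \<subseteq> (\<Union>i\<in>I. Vk i)"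
    and l_chart: "\<And>j. chart_into Y (l j) (Ul j) (Vl j) (Cl j)"
    and finite_J: "finite J" and J_cover: "X \<subseteq> (\<Union>j\<in>J. Vl j)"
begin

definition conj_generators :: "'a germ set" where
  "conj_generators = (\<Union>i\<in>I. \<Union>j\<in>I. conj_germ (k i) (Uk i) (k j) ` (S0 \<inter> germs_between (Ck i) (Ck j)))"

definition chart_generators :: "'a germ set" where
  "chart_generators = (\<Union>i\<in>I. \<Union>j\<in>J. germ_of (\<lambda>w. k i (l j w)) ` (X \<inter> (Cl j \<inter> l j -` Ck i)))"

definition generators :: "'a germ set" where
  "generators = conj_generators \<union> chart_generators"

lemma S0_compact: "compactin (germ_top P) S0"
  and S0_germs: "S0 \<subseteq> germs P"
  using generating compactin_subset_topspace unfolding compact_generating_pair_def by auto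

lemma k_P: "(k i, Uk i) \<in> P" and k_into_X: "k i ` Uk i \<subseteq> X"
  and Ck_compact: "compact (Ck i)" and Vk_Ck: "Vk i \<subseteq> Ck i" and Ck_Uk: "Ck i \<subseteq> Uk i"
  using k_chart[of i] unfolding chart_into_def by blast+

lemma l_P: "(l j, Ul j) \<in> P" and l_into_Y: "l j ` Ul j \<subseteq> Y" and Vl_open: "open (Vl j)"
  and Cl_compact: "compact (Cl j)" and Vl_Cl: "Vl j \<subseteq> Cl j" and Cl_Ul: "Cl j \<subseteq> Ul j"
  using l_chart[of j] unfolding chart_into_def by blast+

lemma kl_P: "((\<lambda>w. k i (l j w)), Ul j \<inter> l j -` Uk i) \<in> P"
  using P_comp[OF l_P k_P] by (simp add: comp_def)

lemma compactin_generators: "compactin (germ_top P) generators"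
proof -
  have "compactin (germ_top P) (conj_germ (k i) (Uk i) (k j) ` (S0 \<inter> germs_between (Ck i) (Ck j)))"
    for i j
    by (rule compactin_conj_germ_image[OF S0_compact k_P k_P Ck_compact Ck_Uk Ck_compact Ck_Uk])
  moreover have "compactin (germ_top P) (germ_of (\<lambda>w. k i (l j w)) ` (X \<inter> (Cl j \<inter> l j -` Ck i)))"
    for i j
  proof (rule compactin_germ_of_image[OF kl_P])
    have "closed (Cl j \<inter> l j -` Ck i)"
      using continuous_on_subset[OF P_continuous[OF l_P] Cl_Ul]
      by (rule continuous_closed_preimage) (simp_all add: compact_imp_closed Cl_compact Ck_compact)
    then show "compact (X \<inter> (Cl j \<inter> l j -` Ck i))" by (rule compact_Int_closed[OF compact_X])
    show "X \<inter> (Cl j \<inter> l j -` Ck i) \<subseteq> Ul j \<inter> l j -` Uk i" using Cl_Ul Ck_Uk by blast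
  qed
  ultimately show ?thesis
    unfolding generators_def conj_generators_def chart_generators_def
    by (intro compactin_Un compactin_UN finite_I finite_J)
qed

lemma generators_subset_restr: "generators \<subseteq> restr P X"
proof -
  have "conj_germ (k i) (Uk i) (k j) s \<in> restr P X" if "s \<in> S0 \<inter> germs_between (Ck i) (Ck j)" for i j s
    using that Ck_Uk unfolding germs_between_def
    by (intro conj_germ_in_restr[OF k_P k_P k_into_X k_into_X]) (auto simp: germs_between_def)
  moreover have "germ_of (\<lambda>w. k i (l j w)) x \<in> restr P X" if "x \<in> X \<inter> (Cl j \<inter> l j -` Ck i)" for i j x
  proof -
    have "x \<in> Ul j \<inter> l j -` Uk i" using that Cl_Ul Ck_Uk by blast
    moreover from this have "k i (l j x) \<in> X" using k_into_X[of i] by blast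
    ultimately show ?thesis using germsI[OF kl_P] that unfolding restr_def by auto
  qed
  ultimately show ?thesis unfolding generators_def conj_generators_def chart_generators_def by blast
qed

lemma generator_src_covered:
  assumes "s \<in> S0 \<union> ginv P S0"
  shows "\<exists>i\<in>I. gsrc s \<in> Vk i"
proof (cases "s \<in> S0")
  case False
  then obtain f U y where "germ_of f y \<in> S0" "s = germ_of (inv_into U f) (f y)"
    using assms unfolding ginv_def by blast
  then show ?thesis using I_cover by force
qed (use I_cover in blast)

lemma conj_germ_generator:
  assumes "s \<in> S0 \<union> ginv P S0" "i \<in> I" "j \<in> I" "gsrc s \<in> Vk i" "gtgt s \<in> Vk j"
  shows "conj_germ (k i) (Uk i) (k j) s \<in> generators \<union> ginv P generators"
proof (cases "s \<in> S0")
  case True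
  then have "s \<in> S0 \<inter> germs_between (Ck i) (Ck j)"
    using assms(4,5) S0_germs Vk_Ck unfolding germs_between_def by blast
  then show ?thesis using assms(2,3) unfolding generators_def conj_generators_def by blast
next
  case False
  then obtain f U y where f: "(f,U) \<in> P" "y \<in> U" "germ_of f y \<in> S0"
    and s: "s = germ_of (inv_into U f) (f y)"
    using assms(1) unfolding ginv_def by blast
  have "f y \<in> Vk i" "y \<in> Vk j" using assms(4,5) s P_inv_into_f[OF f(1,2)] by auto
  then have "germ_of f y \<in> S0 \<inter> germs_between (Ck j) (Ck i)"
    using f(3) S0_germs Vk_Ck[of i] Vk_Ck[of j] unfolding germs_between_def by auto
  then have "conj_germ (k j) (Uk j) (k i) (germ_of f y) \<in> generators"
    using assms(2,3) unfolding generators_def conj_generators_def by blast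
  moreover have "conj_germ (k i) (Uk i) (k j) s \<in> ginv P {conj_germ (k j) (Uk j) (k i) (germ_of f y)}"
    unfolding s using conj_germ_ginv[OF k_P k_P f(1,2)] \<open>f y \<in> Vk i\<close> \<open>y \<in> Vk j\<close> Vk_Ck Ck_Uk
    by blast
  ultimately show ?thesis using ginv_mono[of "{_}" generators] by blast
qed

lemma conj_germ_gpow:
  assumes "e \<in> gpow P (S0 \<union> ginv P S0) (Suc m)" "i \<in> I" "j \<in> I" "gsrc e \<in> Vk i" "gtgt e \<in> Vk j"
  shows "conj_germ (k i) (Uk i) (k j) e \<in> gpow P (generators \<union> ginv P generators) (Suc m)"
  using assms
proof (induction m arbitrary: e j)
  case 0
  then have e: "e \<in> S0 \<union> ginv P S0" using gpow_1_subset by auto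
  then have "e \<in> germs_between (Uk i) (Uk j)"
    using 0 S0_germs ginv_subset_germs Vk_Ck Ck_Uk unfolding germs_between_def by blast
  then have "conj_germ (k i) (Uk i) (k j) e \<in> germs P" by (rule conj_germ_germs_between(1)[OF k_P k_P])
  then show ?case using gpow_1I conj_germ_generator[OF e 0(2-5)] by simp
next
  case (Suc m)
  have "e \<in> gmul P (S0 \<union> ginv P S0) (gpow P (S0 \<union> ginv P S0) (Suc m))" using Suc.prems(1) by simp
  then obtain f U h V x where e: "(f,U) \<in> P" "(h,V) \<in> P" "x \<in> V" "h x \<in> U"
    "germ_of f (h x) \<in> S0 \<union> ginv P S0" "germ_of h x \<in> gpow P (S0 \<union> ginv P S0) (Suc m)"
    "e = germ_of (\<lambda>w. f (h w)) x"
    by (rule gmulE)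
  obtain q where q: "q \<in> I" "h x \<in> Vk q" using generator_src_covered[OF e(5)] by auto
  have x: "x \<in> Vk i" and fhx: "f (h x) \<in> Vk j" using Suc.prems(4,5) e(7) by auto
  have gen: "conj_germ (k q) (Uk q) (k j) (germ_of f (h x)) \<in> generators \<union> ginv P generators"
    using conj_germ_generator[OF e(5) q(1) Suc.prems(3)] q(2) fhx by simp
  have pow: "conj_germ (k i) (Uk i) (k q) (germ_of h x) \<in> gpow P (generators \<union> ginv P generators) (Suc m)"
    using Suc.IH[OF e(6) Suc.prems(2) q(1)] x q(2) by simp
  have "conj_germ (k i) (Uk i) (k j) e
      \<in> gmul P {conj_germ (k q) (Uk q) (k j) (germ_of f (h x))} {conj_germ (k i) (Uk i) (k q) (germ_of h x)}"
    unfolding e(7) using x q(2) fhx Vk_Ck Ck_Uk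
    by (intro conj_germ_gmul[OF k_P k_P k_P e(1-4)]) blast+
  also have "\<dots> \<subseteq> gmul P (generators \<union> ginv P generators) (gpow P (generators \<union> ginv P generators) (Suc m))"
    using gen pow by (intro gmul_mono) auto
  finally show ?case by simp
qed

lemma germ_in_gpow_generators:
  assumes f: "(f,U) \<in> P" "x \<in> U" and X: "x \<in> X" "f x \<in> X"
    and j: "j \<in> J" "j' \<in> J" "x \<in> Vl j" "f x \<in> Vl j'"
    and "conj_germ (l j) (Ul j) (l j') (germ_of f x) \<in> gpow P (S0 \<union> ginv P S0) (Suc m)"
  shows "germ_of f x \<in> gpow P (generators \<union> ginv P generators) (Suc (Suc (Suc m)))"
proof -
  have Ul: "x \<in> Ul j" "f x \<in> Ul j'" and Cl: "x \<in> Cl j" "f x \<in> Cl j'"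
    using j Vl_Cl Cl_Ul by blast+
  then have "l j x \<in> Y" "l j' (f x) \<in> Y" using l_into_Y by blast+
  then obtain i i' where i: "i \<in> I" "l j x \<in> Vk i" "i' \<in> I" "l j' (f x) \<in> Vk i'"
    using I_cover by blast
  then have Uk: "l j x \<in> Uk i" "l j' (f x) \<in> Uk i'" and Ck: "l j x \<in> Ck i" "l j' (f x) \<in> Ck i'"
    using Vk_Ck Ck_Uk by blast+
  have gB: "germ_of f x \<in> germs_between (Ul j) (Ul j')"
    using germsI[OF f] Ul unfolding germs_between_def by simp
  have "conj_germ (k i) (Uk i) (k i') (conj_germ (l j) (Ul j) (l j') (germ_of f x))
      \<in> gpow P (generators \<union> ginv P generators) (Suc m)"
    using conj_germ_gpow[OF assms(9) i(1,3)] conj_germ_germs_between(2,3)[OF l_P l_P gB] i(2,4)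
    by simp
  moreover have "conj_germ (k i) (Uk i) (k i') (conj_germ (l j) (Ul j) (l j') (germ_of f x))
      = conj_germ (\<lambda>w. k i (l j w)) (Ul j \<inter> l j -` Uk i) (\<lambda>w. k i' (l j' w)) (germ_of f x)"
    by (rule conj_germ_conj_germ[OF l_P l_P k_P k_P]) (use Ul Uk in auto)
  ultimately have conj: "conj_germ (\<lambda>w. k i (l j w)) (Ul j \<inter> l j -` Uk i) (\<lambda>w. k i' (l j' w)) (germ_of f x)
      \<in> gpow P (generators \<union> ginv P generators) (Suc m)"
    by simp
  have gens: "germ_of (\<lambda>w. k i (l j w)) x \<in> generators" "germ_of (\<lambda>w. k i' (l j' w)) (f x) \<in> generators"
    using i j X Cl Ck unfolding generators_def chart_generators_def by blast+
  have "germ_of f x \<in> gmul P (ginv P {germ_of (\<lambda>w. k i' (l j' w)) (f x)})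
      (gmul P {conj_germ (\<lambda>w. k i (l j w)) (Ul j \<inter> l j -` Uk i) (\<lambda>w. k i' (l j' w)) (germ_of f x)}
        {germ_of (\<lambda>w. k i (l j w)) x})"
    using Ul Uk by (intro germ_of_conj_decomposition[OF kl_P kl_P f]) auto
  also have "\<dots> \<subseteq> gmul P (generators \<union> ginv P generators)
      (gmul P (gpow P (generators \<union> ginv P generators) (Suc m)) (generators \<union> ginv P generators))"
    using gens conj ginv_mono[of "{germ_of (\<lambda>w. k i' (l j' w)) (f x)}" generators]
    by (intro gmul_mono) auto
  also have "\<dots> \<subseteq> gmul P (generators \<union> ginv P generators) (gpow P (generators \<union> ginv P generators) (Suc (Suc m)))"
    by (rule gmul_mono[OF order_refl gmul_gpow_subset])
  finally show ?thesis by simp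
qed

lemma generators_generate:
  assumes "g \<in> restr P X"
  shows "\<exists>n W. openin (subtopology (germ_top P) (restr P X)) W \<and> g \<in> W
           \<and> W \<subseteq> (\<Union>q\<in>{1..n}. gpow P (generators \<union> ginv P generators) q)"
proof -
  obtain f U x where f: "(f,U) \<in> P" "x \<in> U" "g = germ_of f x" and X: "x \<in> X" "f x \<in> X"
    using assms unfolding restr_def by (auto elim: germsE)
  obtain j j' where j: "j \<in> J" "x \<in> Vl j" "j' \<in> J" "f x \<in> Vl j'" using J_cover X by blast
  define \<Psi> where "\<Psi> = conj_germ (l j) (Ul j) (l j')"
  have \<Psi>_Y: "\<Psi> g' \<in> restr P Y" if "g' \<in> germs_between (Vl j) (Vl j')" for g'
    unfolding \<Psi>_def using that Vl_Cl Cl_Ul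
    by (intro conj_germ_in_restr[OF l_P l_P l_into_Y l_into_Y]) (auto simp: germs_between_def)
  have g: "g \<in> germs_between (Vl j) (Vl j')"
    using germsI[OF f(1,2)] f(3) j unfolding germs_between_def by simp
  obtain n W where W: "openin (subtopology (germ_top P) (restr P Y)) W" "\<Psi> g \<in> W"
    "W \<subseteq> (\<Union>q\<in>{1..n}. gpow P (S0 \<union> ginv P S0) q)"
    using generating \<Psi>_Y[OF g] unfolding compact_generating_pair_def by blast
  obtain W' where W': "openin (germ_top P) W'" "W = W' \<inter> restr P Y"
    using W(1) unfolding openin_subtopology by blast
  define N where "N = restr P X \<inter> {g' \<in> germs_between (Vl j) (Vl j'). \<Psi> g' \<in> W'}"
  have "openin (subtopology (germ_top P) (restr P X)) N"
    unfolding N_def \<Psi>_def using Vl_Cl Cl_Ul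
    by (intro openin_subtopology_Int2 openin_conj_germ_preimage[OF l_P l_P Vl_open _ Vl_open _ W'(1)]) blast+
  moreover have "g \<in> N" using assms g W(2) W'(2) unfolding N_def by blast
  moreover have "N \<subseteq> (\<Union>q\<in>{1..n+2}. gpow P (generators \<union> ginv P generators) q)"
  proof
    fix g' assume g': "g' \<in> N"
    then obtain f' U' x' where f': "(f',U') \<in> P" "x' \<in> U'" "g' = germ_of f' x'"
      and X': "x' \<in> X" "f' x' \<in> X" and V': "x' \<in> Vl j" "f' x' \<in> Vl j'"
      unfolding N_def restr_def germs_between_def by (auto elim: germsE)
    have "\<Psi> g' \<in> W" using g' \<Psi>_Y W'(2) unfolding N_def by blast
    then obtain q where q: "q \<in> {1..n}" "\<Psi> g' \<in> gpow P (S0 \<union> ginv P S0) q"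
      using W(3) by blast
    then obtain m where m: "q = Suc m" by (cases q) auto
    then have "g' \<in> gpow P (generators \<union> ginv P generators) (Suc (Suc (Suc m)))"
      using germ_in_gpow_generators[OF f'(1,2) X' j(1,3) V'] q(2) f'(3) m unfolding \<Psi>_def by simp
    moreover have "Suc (Suc (Suc m)) \<in> {1..n+2}" using q(1) m by auto
    ultimately show "g' \<in> (\<Union>q\<in>{1..n+2}. gpow P (generators \<union> ginv P generators) q)" by blast
  qed
  ultimately show ?thesis by blast
qed

lemma compact_generating_pair_generators:
  assumes "top_transversal P X"
  shows "compact_generating_pair P generators X"
  unfolding compact_generating_pair_def
proof (intro conjI ballI)
  show "generators \<subseteq> germs P" using generators_subset_restr unfolding restr_def by blast
qed (use compactin_generators compact_X assms generators_generate in simp_all)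

end

theorem proposition2p3p2:
  fixes P :: "(('a::metric_space \<Rightarrow> 'a) \<times> 'a set) set"
  assumes "locally_compact_space (euclidean :: 'a topology)"
    and "pseudogroup P"
    and "compactly_generated P"
    and "compact X" and "top_transversal P X"
  shows "\<exists>S. S \<subseteq> restr P X \<and> compact_generating_pair P S X"
proof -
  interpret germ_groupoid P using assms(2) by unfold_locales
  obtain S0 Y where gp: "compact_generating_pair P S0 Y"
    using assms(3) unfolding compactly_generated_def by blast
  then have "compact (Y \<union> gsrc ` S0 \<union> gtgt ` S0)"
    using compact_ends unfolding compact_generating_pair_def by (simp add: compact_Un Un_assoc)
  then obtain I :: "'a set" and k Uk Vk Ck where "finite I" "Y \<union> gsrc ` S0 \<union> gtgt ` S0 \<subseteq> (\<Union>i\<in>I. Vk i)"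
    "\<And>i. chart_into X (k i) (Uk i) (Vk i) (Ck i)"
    by (rule chart_family[OF assms(1,5)]) metis
  moreover obtain J :: "'a set" and l Ul Vl Cl where "finite J" "X \<subseteq> (\<Union>j\<in>J. Vl j)"
    "\<And>j. chart_into Y (l j) (Ul j) (Vl j) (Cl j)"
    using gp unfolding compact_generating_pair_def by (elim conjE chart_family[OF assms(1) _ assms(4)]) metis
  ultimately interpret transversal_change P S0 Y X k l Uk Vk Ck Ul Vl Cl I J
    using gp assms(4) by unfold_locales
  show ?thesis using generators_subset_restr compact_generating_pair_generators[OF assms(5)] by blast
qed

end
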